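(* Let $L$ be a non-trivial regular pseudocomplemented de Morgan algebra with dual $pm$-space $P$, and let $n<\omega$. Then $L$ is a simple algebra of $\mathbf{M}_n$ if and only if for all $x,y\in P$, $\ell(x,y)\le n$ or $\ell(x,\zeta(y))\le n$.
   Context: A $pm$-algebra is $(L;\wedge,\vee,{}^\ast,{}^\prime,0,1)$ with bounded distributive lattice reduct, pseudocomplement ${}^\ast$ and de Morgan involution ${}^\prime$; regular means any two congruences sharing a class are equal. $\mathbf{M}_n$ is the variety of regular $pm$-algebras satisfying $(x\wedge x^{\prime\ast})^{n(\prime\ast)}=(x\wedge x^{\prime\ast})^{(n+1)(\prime\ast)}$, where $x^{0(\prime\ast)}=x$, $x^{(k+1)(\prime\ast)}=((x^{k(\prime\ast)})')^\ast$. The dual $pm$-space is the Priestley space $(P;\tau,\le)$ of prime ideals with involution $\zeta(I)=\{a:a'\notin I\}$. $\ell(x,y)$ is the distance in the comparability graph of $(P;\le)$ ($0$ if $x=y$, $\infty$ if no path). *)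

theory Defs
  imports Main "HOL-Library.Extended_Nat"
begin

text \<open>A pm-algebra on the whole type 'a: bounded distributive lattice reduct
  (from the type class), a pseudocomplement ps and a de Morgan involution dm.\<close>

definition is_pseudocomplement :: "('a::{distrib_lattice,bounded_lattice} \<Rightarrow> 'a) \<Rightarrow> bool" where
  "is_pseudocomplement ps \<longleftrightarrow> (\<forall>a b. inf a b = bot \<longleftrightarrow> b \<le> ps a)"

definition is_de_morgan_op :: "('a::{distrib_lattice,bounded_lattice} \<Rightarrow> 'a) \<Rightarrow> bool" where
  "is_de_morgan_op dm \<longleftrightarrow> (\<forall>a b. dm (inf a b) = sup (dm a) (dm b)) \<and> (\<forall>a. dm (dm a) = a)"

definition pm_algebra :: "('a::{distrib_lattice,bounded_lattice} \<Rightarrow> 'a) \<Rightarrow> ('a \<Rightarrow> 'a) \<Rightarrow> bool" where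
  "pm_algebra ps dm \<longleftrightarrow> is_pseudocomplement ps \<and> is_de_morgan_op dm"

definition pm_congruence :: "('a::{distrib_lattice,bounded_lattice} \<Rightarrow> 'a) \<Rightarrow> ('a \<Rightarrow> 'a) \<Rightarrow> 'a rel \<Rightarrow> bool" where
  "pm_congruence ps dm \<theta> \<longleftrightarrow> equiv UNIV \<theta> \<and>
     (\<forall>a b c d. (a, b) \<in> \<theta> \<longrightarrow> (c, d) \<in> \<theta> \<longrightarrow>
        (inf a c, inf b d) \<in> \<theta> \<and> (sup a c, sup b d) \<in> \<theta>) \<and>
     (\<forall>a b. (a, b) \<in> \<theta> \<longrightarrow> (ps a, ps b) \<in> \<theta> \<and> (dm a, dm b) \<in> \<theta>)"

definition pm_regular :: "('a::{distrib_lattice,bounded_lattice} \<Rightarrow> 'a) \<Rightarrow> ('a \<Rightarrow> 'a) \<Rightarrow> bool" where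
  "pm_regular ps dm \<longleftrightarrow> (\<forall>\<theta> \<phi>. pm_congruence ps dm \<theta> \<longrightarrow> pm_congruence ps dm \<phi> \<longrightarrow>
      (\<exists>a. \<theta> `` {a} = \<phi> `` {a}) \<longrightarrow> \<theta> = \<phi>)"

definition pm_simple :: "('a::{distrib_lattice,bounded_lattice} \<Rightarrow> 'a) \<Rightarrow> ('a \<Rightarrow> 'a) \<Rightarrow> bool" where
  "pm_simple ps dm \<longleftrightarrow> (\<exists>a b::'a. a \<noteq> b) \<and>
     (\<forall>\<theta>. pm_congruence ps dm \<theta> \<longrightarrow> \<theta> = Id \<or> \<theta> = UNIV)"

text \<open>x^{k('*)}: k-fold iteration of x \<mapsto> (x')^*.\<close>

definition pm_iter :: "('a \<Rightarrow> 'a) \<Rightarrow> ('a \<Rightarrow> 'a) \<Rightarrow> nat \<Rightarrow> 'a \<Rightarrow> 'a" where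
  "pm_iter ps dm k = (\<lambda>y. ps (dm y)) ^^ k"

definition in_M :: "nat \<Rightarrow> ('a::{distrib_lattice,bounded_lattice} \<Rightarrow> 'a) \<Rightarrow> ('a \<Rightarrow> 'a) \<Rightarrow> bool" where
  "in_M n ps dm \<longleftrightarrow> pm_algebra ps dm \<and> pm_regular ps dm \<and>
     (\<forall>x. pm_iter ps dm n (inf x (ps (dm x))) = pm_iter ps dm (Suc n) (inf x (ps (dm x))))"

text \<open>Prime ideals (points of the dual Priestley space), ordered by inclusion.\<close>

definition prime_ideal :: "'a::{distrib_lattice,bounded_lattice} set \<Rightarrow> bool" where
  "prime_ideal I \<longleftrightarrow> I \<noteq> {} \<and> top \<notin> I \<and>
     (\<forall>a b. a \<in> I \<longrightarrow> b \<le> a \<longrightarrow> b \<in> I) \<and>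
     (\<forall>a b. a \<in> I \<longrightarrow> b \<in> I \<longrightarrow> sup a b \<in> I) \<and>
     (\<forall>a b. inf a b \<in> I \<longrightarrow> a \<in> I \<or> b \<in> I)"

definition dual_space :: "'a::{distrib_lattice,bounded_lattice} set set" where
  "dual_space = {I. prime_ideal I}"

definition zeta :: "('a \<Rightarrow> 'a) \<Rightarrow> 'a set \<Rightarrow> 'a set" where
  "zeta dm I = {a. dm a \<notin> I}"

definition comp_walk :: "'b set \<Rightarrow> ('b \<Rightarrow> 'b \<Rightarrow> bool) \<Rightarrow> 'b \<Rightarrow> 'b \<Rightarrow> nat \<Rightarrow> bool" where
  "comp_walk P le x y k \<longleftrightarrow> (\<exists>f::nat \<Rightarrow> 'b. f 0 = x \<and> f k = y \<and> (\<forall>i\<le>k. f i \<in> P) \<and>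
      (\<forall>i<k. f i \<noteq> f (Suc i) \<and> (le (f i) (f (Suc i)) \<or> le (f (Suc i)) (f i))))"

definition ell :: "'b set \<Rightarrow> ('b \<Rightarrow> 'b \<Rightarrow> bool) \<Rightarrow> 'b \<Rightarrow> 'b \<Rightarrow> enat" where
  "ell P le x y = (if \<exists>k. comp_walk P le x y k
                   then enat (LEAST k. comp_walk P le x y k) else \<infinity>)"

end

theory Submission
  imports Defs
begin

text \<open>
  Write a+ = psdm a for (a')* and core c for c \<sqinter> c+. Regularity forbids three-element
  chains of prime ideals: from I \<subset> J \<subset> K one builds s \<in> J and t \<notin> J such that t \<sqinter> s and t
  have the same pseudocomplement and the same image under +, hence coincide. So every point of P
  is minimal or maximal, and a walk in the comparability graph that starts at a minimal point
  alternates between the two levels.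

  Algebraically, L is a simple member of M_n iff (core c)+...+ = 0 (n times) for all c \<noteq> 1: that
  element s is a fixed point of +, so a \<sqinter> s = b \<sqinter> s is a congruence, which is either the
  identity or total.

  Two facts about prime ideals translate this identity into distances. If b+ \<notin> I, then b' lies in
  every prime comparable with I; iterating, if the k-fold + of a is not in I and \<ell>(I,K) \<le> k, then
  a \<notin> \<zeta>^k(K). Conversely, if the k-fold + of every element of an up-directed set Q lies in I, the
  prime ideal theorem yields a walk of length at most k from I to \<zeta>^k(p) for a prime p \<supseteq> Q. The
  first fact, applied to a prime containing core c but not its dual, shows that the distance bound
  forces the n-fold + of core c to vanish. The second, applied to Q = core[w] for a maximal prime w,
  yields walks of length n or n + 1 from a minimal prime to w or \<zeta>(w), and the alternation of walks
  removes the extra step.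
\<close>

definition lattice_ideal :: "'a::{distrib_lattice,bounded_lattice} set \<Rightarrow> bool" where
  "lattice_ideal J \<longleftrightarrow> J \<noteq> {} \<and> (\<forall>a b. a \<in> J \<longrightarrow> b \<le> a \<longrightarrow> b \<in> J) \<and>
     (\<forall>a b. a \<in> J \<longrightarrow> b \<in> J \<longrightarrow> sup a b \<in> J)"

definition lattice_filter :: "'a::{distrib_lattice,bounded_lattice} set \<Rightarrow> bool" where
  "lattice_filter F \<longleftrightarrow> F \<noteq> {} \<and> (\<forall>a b. a \<in> F \<longrightarrow> a \<le> b \<longrightarrow> b \<in> F) \<and>
     (\<forall>a b. a \<in> F \<longrightarrow> b \<in> F \<longrightarrow> inf a b \<in> F)"

lemma lattice_idealD:
  assumes "lattice_ideal J"
  shows lattice_ideal_nonempty: "J \<noteq> {}"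
    and lattice_ideal_down: "a \<in> J \<Longrightarrow> b \<le> a \<Longrightarrow> b \<in> J"
    and lattice_ideal_sup: "a \<in> J \<Longrightarrow> b \<in> J \<Longrightarrow> sup a b \<in> J"
  using assms unfolding lattice_ideal_def by blast+

lemma lattice_filterD:
  assumes "lattice_filter F"
  shows lattice_filter_nonempty: "F \<noteq> {}"
    and lattice_filter_up: "a \<in> F \<Longrightarrow> a \<le> b \<Longrightarrow> b \<in> F"
    and lattice_filter_inf: "a \<in> F \<Longrightarrow> b \<in> F \<Longrightarrow> inf a b \<in> F"
  using assms unfolding lattice_filter_def by blast+

lemma lattice_ideal_Union_chain:
  assumes "C \<noteq> {}" and "\<And>J. J \<in> C \<Longrightarrow> lattice_ideal J" and "chain\<^sub>\<subseteq> C"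
  shows "lattice_ideal (\<Union>C)"
  unfolding lattice_ideal_def
proof (intro conjI allI impI)
  show "\<Union>C \<noteq> {}" using assms(1,2) unfolding lattice_ideal_def by blast
  show "b \<in> \<Union>C" if "a \<in> \<Union>C" "b \<le> a" for a b
    using that assms(2) unfolding lattice_ideal_def by blast
  show "sup a b \<in> \<Union>C" if ab: "a \<in> \<Union>C" "b \<in> \<Union>C" for a b
  proof -
    obtain X Y where "X \<in> C" "a \<in> X" "Y \<in> C" "b \<in> Y" using ab by blast
    with assms(3) obtain Z where "Z \<in> C" "a \<in> Z" "b \<in> Z"
      unfolding chain_subset_def by blast
    then show ?thesis using assms(2) unfolding lattice_ideal_def by blast
  qed
qed

lemma lattice_ideal_join:
  assumes "lattice_ideal M"
  shows "lattice_ideal {z. \<exists>m\<in>M. z \<le> sup m c}"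
  unfolding lattice_ideal_def
proof (intro conjI allI impI)
  show "{z. \<exists>m\<in>M. z \<le> sup m c} \<noteq> {}" using assms unfolding lattice_ideal_def by auto
  show "b \<in> {z. \<exists>m\<in>M. z \<le> sup m c}" if "a \<in> {z. \<exists>m\<in>M. z \<le> sup m c}" "b \<le> a" for a b
    using that by (auto intro: order.trans)
  show "sup a b \<in> {z. \<exists>m\<in>M. z \<le> sup m c}"
    if ab: "a \<in> {z. \<exists>m\<in>M. z \<le> sup m c}" "b \<in> {z. \<exists>m\<in>M. z \<le> sup m c}" for a b
  proof -
    obtain m1 m2 where "m1 \<in> M" "a \<le> sup m1 c" "m2 \<in> M" "b \<le> sup m2 c" using ab by auto
    moreover from this have "sup m1 m2 \<in> M" by (intro lattice_ideal_sup[OF assms])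
    moreover have "sup a b \<le> sup (sup m1 m2) c"
    proof -
      have "sup m1 c \<le> sup (sup m1 m2) c" "sup m2 c \<le> sup (sup m1 m2) c"
        by (simp_all add: le_supI1 le_supI2)
      then show ?thesis using calculation by (meson le_sup_iff order.trans)
    qed
    ultimately show ?thesis by blast
  qed
qed

lemma maximal_disjoint_ideal_prime:
  assumes M: "lattice_ideal M" and F: "lattice_filter F" and MF: "M \<inter> F = {}"
    and max: "\<And>J. lattice_ideal J \<Longrightarrow> M \<subseteq> J \<Longrightarrow> J \<inter> F = {} \<Longrightarrow> J = M"
  shows "prime_ideal M"
proof -
  have meets_F: "\<exists>m\<in>M. \<exists>z\<in>F. z \<le> sup m c" if "c \<notin> M" for c
  proof (rule ccontr)
    let ?M' = "{z. \<exists>m\<in>M. z \<le> sup m c}"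
    assume "\<not> ?thesis"
    then have "?M' \<inter> F = {}" by blast
    moreover have "M \<subseteq> ?M'" using sup_ge1 by blast
    ultimately have "?M' = M" by (rule max[OF lattice_ideal_join[OF M], rotated])
    moreover have "c \<in> ?M'" using lattice_ideal_nonempty[OF M] sup_ge2 by blast
    ultimately show False using that by simp
  qed
  have "a \<in> M \<or> b \<in> M" if ab: "inf a b \<in> M" for a b
  proof (rule ccontr)
    assume "\<not> (a \<in> M \<or> b \<in> M)"
    then obtain m1 z1 m2 z2 where "m1 \<in> M" "z1 \<in> F" and z1: "z1 \<le> sup m1 a"
      and "m2 \<in> M" "z2 \<in> F" and z2: "z2 \<le> sup m2 b"
      using meets_F[of a] meets_F[of b] by blast
    have "inf z1 z2 \<le> sup (sup m1 m2) (inf a b)"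
    proof -
      have "inf z1 z2 \<le> inf (sup m1 a) (sup m2 b)" using z1 z2 by (rule inf_mono)
      also have "\<dots> \<le> sup (sup m1 m2) (inf a b)"
        by (simp add: inf_sup_distrib1 inf_sup_distrib2 le_supI1 le_supI2 inf.coboundedI1 inf.coboundedI2)
      finally show ?thesis .
    qed
    moreover have "sup (sup m1 m2) (inf a b) \<in> M"
      using \<open>m1 \<in> M\<close> \<open>m2 \<in> M\<close> ab by (intro lattice_ideal_sup[OF M])
    ultimately have "inf z1 z2 \<in> M" using lattice_ideal_down[OF M] by blast
    moreover have "inf z1 z2 \<in> F" using \<open>z1 \<in> F\<close> \<open>z2 \<in> F\<close> by (rule lattice_filter_inf[OF F])
    ultimately show False using MF by blast
  qed
  moreover have "top \<notin> M"
  proof -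
    obtain z where "z \<in> F" using lattice_filter_nonempty[OF F] by blast
    then have "top \<in> F" using lattice_filter_up[OF F] top_greatest by blast
    then show ?thesis using MF by blast
  qed
  ultimately show ?thesis using M unfolding lattice_ideal_def prime_ideal_def by blast
qed

lemma lattice_ideal_atMost: "lattice_ideal {..b}"
  unfolding lattice_ideal_def by (auto simp: order.trans[of _ _ b])

lemma lattice_filter_atLeast: "lattice_filter {a..}"
  unfolding lattice_filter_def by (auto simp: order.trans[of a])

theorem prime_ideal_theorem:
  assumes I: "lattice_ideal I" and F: "lattice_filter F" and IF: "I \<inter> F = {}"
  obtains P where "prime_ideal P" "I \<subseteq> P" "P \<inter> F = {}"
proof -
  let ?A = "{J. lattice_ideal J \<and> I \<subseteq> J \<and> J \<inter> F = {}}"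
  have "\<exists>U\<in>?A. \<forall>X\<in>C. X \<subseteq> U" if "C \<in> chains ?A" for C
  proof (cases "C = {}")
    case True
    then show ?thesis using I IF by (intro bexI[of _ I]) auto
  next
    case False
    from that have CA: "C \<subseteq> ?A" and "chain\<^sub>\<subseteq> C" by (auto simp: chains_def)
    then have "lattice_ideal (\<Union>C)" by (intro lattice_ideal_Union_chain[OF False]) auto
    moreover have "I \<subseteq> \<Union>C" "\<Union>C \<inter> F = {}" using False CA by blast+
    ultimately show ?thesis by (intro bexI[of _ "\<Union>C"]) auto
  qed
  then have "\<exists>M\<in>?A. \<forall>X\<in>?A. M \<subseteq> X \<longrightarrow> X = M" by (intro Zorn_Lemma2) blast
  then obtain M where M: "M \<in> ?A" and max: "\<forall>X\<in>?A. M \<subseteq> X \<longrightarrow> X = M" by blast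
  have "prime_ideal M"
  proof (rule maximal_disjoint_ideal_prime[OF _ F])
    show "lattice_ideal M" "M \<inter> F = {}" using M by auto
    show "J = M" if "lattice_ideal J" "M \<subseteq> J" "J \<inter> F = {}" for J
      using that M max by blast
  qed
  with M show thesis by (intro that) auto
qed

lemma prime_ideal_separation:
  assumes "\<not> a \<le> b"
  obtains P where "prime_ideal P" "b \<in> P" "a \<notin> P"
proof -
  have "{..b} \<inter> {a..} = {}" using assms by (auto simp: order.trans[of a _ b])
  then obtain P where "prime_ideal P" "{..b} \<subseteq> P" "P \<inter> {a..} = {}"
    by (rule prime_ideal_theorem[OF lattice_ideal_atMost lattice_filter_atLeast])
  then show thesis by (intro that) auto
qed

lemma comp_walk_0 [simp]: "comp_walk P le x y 0 \<longleftrightarrow> x = y \<and> x \<in> P"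
  unfolding comp_walk_def by auto

lemma comp_walk_Suc:
  "comp_walk P le x z (Suc m) \<longleftrightarrow>
     x \<in> P \<and> (\<exists>y. x \<noteq> y \<and> (le x y \<or> le y x) \<and> comp_walk P le y z m)"
proof
  assume "comp_walk P le x z (Suc m)"
  then obtain h where h: "h 0 = x" "h (Suc m) = z" "\<forall>i\<le>Suc m. h i \<in> P"
    "\<forall>i<Suc m. h i \<noteq> h (Suc i) \<and> (le (h i) (h (Suc i)) \<or> le (h (Suc i)) (h i))"
    unfolding comp_walk_def by blast
  have "comp_walk P le (h 1) z m"
    unfolding comp_walk_def by (rule exI[of _ "\<lambda>i. h (Suc i)"]) (use h in auto)
  moreover have "x \<noteq> h 1 \<and> (le x (h 1) \<or> le (h 1) x)" using h(1) h(4)[rule_format, of 0] by auto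
  ultimately show "x \<in> P \<and> (\<exists>y. x \<noteq> y \<and> (le x y \<or> le y x) \<and> comp_walk P le y z m)"
    using h by auto
next
  assume "x \<in> P \<and> (\<exists>y. x \<noteq> y \<and> (le x y \<or> le y x) \<and> comp_walk P le y z m)"
  then obtain y h where y: "x \<in> P" "x \<noteq> y" "le x y \<or> le y x" and
    h: "h 0 = y" "h m = z" "\<forall>i\<le>m. h i \<in> P"
    "\<forall>i<m. h i \<noteq> h (Suc i) \<and> (le (h i) (h (Suc i)) \<or> le (h (Suc i)) (h i))"
    unfolding comp_walk_def by blast
  let ?h = "\<lambda>i. case i of 0 \<Rightarrow> x | Suc j \<Rightarrow> h j"
  have "\<forall>i\<le>Suc m. ?h i \<in> P" "\<forall>i<Suc m. ?h i \<noteq> ?h (Suc i) \<and> (le (?h i) (?h (Suc i)) \<or> le (?h (Suc i)) (?h i))"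
    using y h by (auto split: nat.split simp: less_Suc_eq_0_disj)
  then show "comp_walk P le x z (Suc m)"
    unfolding comp_walk_def using h by (intro exI[of _ ?h]) auto
qed

lemma ell_le_enat_iff: "ell P le x y \<le> enat n \<longleftrightarrow> (\<exists>m\<le>n. comp_walk P le x y m)"
proof
  assume "ell P le x y \<le> enat n"
  then have ex: "\<exists>k. comp_walk P le x y k" and "(LEAST k. comp_walk P le x y k) \<le> n"
    unfolding ell_def by (auto split: if_splits)
  then show "\<exists>m\<le>n. comp_walk P le x y m" using LeastI_ex[OF ex] by blast
next
  assume "\<exists>m\<le>n. comp_walk P le x y m"
  then obtain m where "m \<le> n" "comp_walk P le x y m" by blast
  then show "ell P le x y \<le> enat n"
    unfolding ell_def using Least_le[of "comp_walk P le x y" m] by auto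
qed

fun lazy_walk :: "'b set \<Rightarrow> ('b \<Rightarrow> 'b \<Rightarrow> bool) \<Rightarrow> nat \<Rightarrow> 'b \<Rightarrow> 'b \<Rightarrow> bool" where
  "lazy_walk P le 0 x z \<longleftrightarrow> x \<in> P \<and> z = x"
| "lazy_walk P le (Suc k) x z \<longleftrightarrow>
     x \<in> P \<and> (\<exists>y. (y = x \<or> le x y \<or> le y x) \<and> lazy_walk P le k y z)"

lemma lazy_walk_start_in: "lazy_walk P le k x z \<Longrightarrow> x \<in> P"
  by (cases k) auto

lemma lazy_walk_Suc: "lazy_walk P le k x z \<Longrightarrow> lazy_walk P le (Suc k) x z"
  using lazy_walk_start_in by auto

lemma lazy_walk_mono:
  assumes "lazy_walk P le k x z" and "k \<le> m"
  shows "lazy_walk P le m x z"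
  using assms(2,1) by (induction rule: dec_induct) (simp_all add: lazy_walk_Suc del: lazy_walk.simps)

lemma lazy_walk_append:
  "lazy_walk P le a x y \<Longrightarrow> lazy_walk P le b y z \<Longrightarrow> lazy_walk P le (a + b) x z"
  by (induction a arbitrary: x) auto

lemma lazy_walk_if_comp_walk: "comp_walk P le x z m \<Longrightarrow> lazy_walk P le m x z"
  by (induction m arbitrary: x) (auto simp: comp_walk_Suc)

lemma comp_walk_if_lazy_walk: "lazy_walk P le k x z \<Longrightarrow> \<exists>m\<le>k. comp_walk P le x z m"
proof (induction k arbitrary: x)
  case 0
  then show ?case by auto
next
  case (Suc k)
  then obtain y where x: "x \<in> P" and xy: "y = x \<or> le x y \<or> le y x"
    and "lazy_walk P le k y z"
    by auto
  then obtain m where "m \<le> k" and m: "comp_walk P le y z m" using Suc.IH by blast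
  have "comp_walk P le x z m \<or> comp_walk P le x z (Suc m)"
    using x xy m by (cases "y = x") (auto simp: comp_walk_Suc)
  then show ?case using \<open>m \<le> k\<close> le_SucI by blast
qed

lemma ell_le_enat_iff_lazy_walk: "ell P le x z \<le> enat n \<longleftrightarrow> lazy_walk P le n x z"
  unfolding ell_le_enat_iff
  using lazy_walk_if_comp_walk comp_walk_if_lazy_walk lazy_walk_mono by metis

lemma lazy_walk_antitone_image:
  assumes "\<And>a. a \<in> P \<Longrightarrow> \<phi> a \<in> P"
    and "\<And>a b. a \<in> P \<Longrightarrow> b \<in> P \<Longrightarrow> le a b \<Longrightarrow> le (\<phi> b) (\<phi> a)"
  shows "lazy_walk P le k x z \<Longrightarrow> lazy_walk P le k (\<phi> x) (\<phi> z)"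
proof (induction k arbitrary: x)
  case 0
  then show ?case using assms(1) by simp
next
  case (Suc k)
  then obtain y where "x \<in> P" "y = x \<or> le x y \<or> le y x" "lazy_walk P le k y z" by auto
  moreover from this(3) have "y \<in> P" by (rule lazy_walk_start_in)
  ultimately have "\<phi> y = \<phi> x \<or> le (\<phi> x) (\<phi> y) \<or> le (\<phi> y) (\<phi> x)"
    using assms(2) by blast
  then show ?case using Suc.IH \<open>lazy_walk P le k y z\<close> \<open>x \<in> P\<close> assms(1) by auto
qed

definition minimal_in :: "'b set set \<Rightarrow> 'b set \<Rightarrow> bool" where
  "minimal_in P x \<longleftrightarrow> x \<in> P \<and> (\<forall>y\<in>P. \<not> y \<subset> x)"

definition maximal_in :: "'b set set \<Rightarrow> 'b set \<Rightarrow> bool" where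
  "maximal_in P x \<longleftrightarrow> x \<in> P \<and> (\<forall>y\<in>P. \<not> x \<subset> y)"

definition no_three_chains :: "'b set set \<Rightarrow> bool" where
  "no_three_chains P \<longleftrightarrow> (\<forall>a\<in>P. \<forall>b\<in>P. \<forall>c\<in>P. \<not> (a \<subset> b \<and> b \<subset> c))"

lemma minimal_or_maximal_in:
  "no_three_chains P \<Longrightarrow> x \<in> P \<Longrightarrow> minimal_in P x \<or> maximal_in P x"
  unfolding no_three_chains_def minimal_in_def maximal_in_def by blast

lemma comp_walk_alternates:
  assumes P: "no_three_chains P"
  shows "comp_walk P (\<subseteq>) x z (Suc k) \<Longrightarrow>
    (minimal_in P x \<longrightarrow> (if even k then \<not> minimal_in P z else \<not> maximal_in P z)) \<and>
    (maximal_in P x \<longrightarrow> (if even k then \<not> maximal_in P z else \<not> minimal_in P z))"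
proof (induction k arbitrary: x)
  case 0
  then obtain "x \<in> P" "z \<in> P" "x \<subset> z \<or> z \<subset> x" by (auto simp: comp_walk_Suc)
  then show ?case unfolding minimal_in_def maximal_in_def by auto
next
  case (Suc k)
  then obtain y where "x \<in> P" "x \<subset> y \<or> y \<subset> x" "comp_walk P (\<subseteq>) y z (Suc k)"
    by (auto simp: comp_walk_Suc)
  moreover from this have "y \<in> P" by (auto simp: comp_walk_Suc)
  ultimately have "(minimal_in P x \<longrightarrow> maximal_in P y) \<and> (maximal_in P x \<longrightarrow> minimal_in P y)"
    using P unfolding no_three_chains_def minimal_in_def maximal_in_def by blast
  then show ?case using Suc.IH[OF \<open>comp_walk P (\<subseteq>) y z (Suc k)\<close>] by auto
qed

lemma lazy_walk_shorten_by_parity: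
  assumes P: "no_three_chains P" and x: "minimal_in P x"
    and walk: "lazy_walk P (\<subseteq>) (Suc k) x z"
    and z: "if even k then minimal_in P z else maximal_in P z"
  shows "lazy_walk P (\<subseteq>) k x z"
proof -
  obtain m where "m \<le> Suc k" and m: "comp_walk P (\<subseteq>) x z m"
    using comp_walk_if_lazy_walk[OF walk] by blast
  moreover have "m \<noteq> Suc k"
    using comp_walk_alternates[OF P] x z by (metis m)
  ultimately show ?thesis
    using lazy_walk_if_comp_walk lazy_walk_mono by (metis le_Suc_eq)
qed

lemma prime_idealD:
  assumes "prime_ideal P"
  shows prime_ideal_down: "a \<in> P \<Longrightarrow> b \<le> a \<Longrightarrow> b \<in> P"
    and prime_ideal_sup: "a \<in> P \<Longrightarrow> b \<in> P \<Longrightarrow> sup a b \<in> P"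
    and prime_ideal_inf: "inf a b \<in> P \<Longrightarrow> a \<in> P \<or> b \<in> P"
    and prime_ideal_top: "top \<notin> P"
  using assms unfolding prime_ideal_def by blast+

lemma prime_ideal_bot: "prime_ideal P \<Longrightarrow> bot \<in> P"
  using prime_ideal_down by (metis prime_ideal_def ex_in_conv bot.extremum)

lemma prime_ideal_inf_iff: "prime_ideal P \<Longrightarrow> inf a b \<in> P \<longleftrightarrow> a \<in> P \<or> b \<in> P"
  using prime_ideal_inf prime_ideal_down by (metis inf.cobounded1 inf.cobounded2)

lemma prime_ideal_sup_iff: "prime_ideal P \<Longrightarrow> sup a b \<in> P \<longleftrightarrow> a \<in> P \<and> b \<in> P"
  using prime_ideal_sup prime_ideal_down by (metis sup.cobounded1 sup.cobounded2)

lemma in_dual_space_iff [simp]: "I \<in> dual_space \<longleftrightarrow> prime_ideal I"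
  unfolding dual_space_def by simp

definition upward_directed :: "'a::order set \<Rightarrow> bool" where
  "upward_directed Q \<longleftrightarrow> (\<forall>a\<in>Q. \<forall>b\<in>Q. \<exists>c\<in>Q. a \<le> c \<and> b \<le> c)"

lemma upward_directed_image:
  "upward_directed Q \<Longrightarrow> mono h \<Longrightarrow> upward_directed (h ` Q)"
  unfolding upward_directed_def mono_def by blast

lemma prime_ideal_upward_directed: "prime_ideal P \<Longrightarrow> upward_directed P"
  unfolding upward_directed_def by (metis prime_ideal_sup sup_ge1 sup_ge2)

lemma pm_congruenceI:
  assumes "refl \<theta>" "sym \<theta>" "trans \<theta>"
    and "\<And>a b c d. (a, b) \<in> \<theta> \<Longrightarrow> (c, d) \<in> \<theta> \<Longrightarrow> (inf a c, inf b d) \<in> \<theta>"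
    and "\<And>a b c d. (a, b) \<in> \<theta> \<Longrightarrow> (c, d) \<in> \<theta> \<Longrightarrow> (sup a c, sup b d) \<in> \<theta>"
    and "\<And>a b. (a, b) \<in> \<theta> \<Longrightarrow> (ps a, ps b) \<in> \<theta>"
    and "\<And>a b. (a, b) \<in> \<theta> \<Longrightarrow> (dm a, dm b) \<in> \<theta>"
  shows "pm_congruence ps dm \<theta>"
  unfolding pm_congruence_def equiv_def using assms by (intro conjI allI impI) auto

lemma pm_congruenceD:
  assumes "pm_congruence ps dm \<theta>"
  shows pm_congruence_refl: "(a, a) \<in> \<theta>"
    and pm_congruence_sym: "(a, b) \<in> \<theta> \<Longrightarrow> (b, a) \<in> \<theta>"
    and pm_congruence_trans: "(a, b) \<in> \<theta> \<Longrightarrow> (b, c) \<in> \<theta> \<Longrightarrow> (a, c) \<in> \<theta>"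
    and pm_congruence_inf: "(a, b) \<in> \<theta> \<Longrightarrow> (c, d) \<in> \<theta> \<Longrightarrow> (inf a c, inf b d) \<in> \<theta>"
    and pm_congruence_sup: "(a, b) \<in> \<theta> \<Longrightarrow> (c, d) \<in> \<theta> \<Longrightarrow> (sup a c, sup b d) \<in> \<theta>"
    and pm_congruence_ps: "(a, b) \<in> \<theta> \<Longrightarrow> (ps a, ps b) \<in> \<theta>"
    and pm_congruence_dm: "(a, b) \<in> \<theta> \<Longrightarrow> (dm a, dm b) \<in> \<theta>"
proof -
  from assms have e: "equiv UNIV \<theta>"
    and ops: "\<forall>a b c d. (a, b) \<in> \<theta> \<longrightarrow> (c, d) \<in> \<theta> \<longrightarrow>
        (inf a c, inf b d) \<in> \<theta> \<and> (sup a c, sup b d) \<in> \<theta>"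
    and unops: "\<forall>a b. (a, b) \<in> \<theta> \<longrightarrow> (ps a, ps b) \<in> \<theta> \<and> (dm a, dm b) \<in> \<theta>"
    unfolding pm_congruence_def by blast+
  show "(a, a) \<in> \<theta>" using e by (simp add: equiv_def refl_on_def)
  show "(a, b) \<in> \<theta> \<Longrightarrow> (b, a) \<in> \<theta>" using e by (simp add: equiv_def sym_def)
  show "(a, b) \<in> \<theta> \<Longrightarrow> (b, c) \<in> \<theta> \<Longrightarrow> (a, c) \<in> \<theta>"
    using e unfolding equiv_def by (meson transD)
  show "(a, b) \<in> \<theta> \<Longrightarrow> (c, d) \<in> \<theta> \<Longrightarrow> (inf a c, inf b d) \<in> \<theta>"
    "(a, b) \<in> \<theta> \<Longrightarrow> (c, d) \<in> \<theta> \<Longrightarrow> (sup a c, sup b d) \<in> \<theta>"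
    using ops by simp_all
  show "(a, b) \<in> \<theta> \<Longrightarrow> (ps a, ps b) \<in> \<theta>" "(a, b) \<in> \<theta> \<Longrightarrow> (dm a, dm b) \<in> \<theta>"
    using unops by simp_all
qed

lemma pm_congruence_Id: "pm_congruence ps dm Id"
  by (rule pm_congruenceI) (auto simp: refl_Id sym_Id trans_Id)

lemma pm_congruence_eq_UNIV:
  assumes \<theta>: "pm_congruence ps dm \<theta>" and "(top, bot) \<in> \<theta>"
  shows "\<theta> = UNIV"
proof -
  have "(sup a top, sup a bot) \<in> \<theta>" for a
    using pm_congruence_sup[OF \<theta> pm_congruence_refl[OF \<theta>] assms(2)] .
  then have "(top, a) \<in> \<theta>" for a by simp
  then have "(a, b) \<in> \<theta>" for a b
    using pm_congruence_sym[OF \<theta>] pm_congruence_trans[OF \<theta>] by meson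
  then show ?thesis by auto
qed

lemma pm_regular_congruence_eq_Id:
  assumes "pm_regular ps dm" and "pm_congruence ps dm \<theta>" and "\<theta> `` {a} = {a}"
  shows "\<theta> = Id"
  using assms pm_congruence_Id unfolding pm_regular_def by (metis Image_Id)

locale pm_alg =
  fixes ps dm :: "'a::{distrib_lattice,bounded_lattice} \<Rightarrow> 'a"
  assumes pm_algebra: "pm_algebra ps dm"
begin

lemma le_ps_iff: "b \<le> ps a \<longleftrightarrow> inf a b = bot"
  using pm_algebra unfolding pm_algebra_def is_pseudocomplement_def by blast

lemma dm_inf: "dm (inf a b) = sup (dm a) (dm b)"
  using pm_algebra unfolding pm_algebra_def is_de_morgan_op_def by blast

lemma dm_dm [simp]: "dm (dm a) = a"
  using pm_algebra unfolding pm_algebra_def is_de_morgan_op_def by blast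

lemma dm_sup: "dm (sup a b) = inf (dm a) (dm b)"
  by (metis dm_dm dm_inf)

lemma dm_le_iff [simp]: "dm a \<le> dm b \<longleftrightarrow> b \<le> a"
  by (metis dm_dm dm_inf inf.absorb_iff2 sup.absorb_iff2)

lemma dm_bot [simp]: "dm bot = top"
  by (metis dm_le_iff bot_least dm_dm top.extremum_uniqueI)

lemma dm_top [simp]: "dm top = bot"
  by (metis dm_bot dm_dm)

lemma dm_eq_bot_iff [simp]: "dm a = bot \<longleftrightarrow> a = top"
  by (metis dm_bot dm_dm)

lemma inf_ps [simp]: "inf a (ps a) = bot"
  using le_ps_iff by blast

lemma ps_antimono: "a \<le> b \<Longrightarrow> ps b \<le> ps a"
  using inf_mono[OF _ order.refl, of a b "ps b"] by (simp add: le_ps_iff bot_unique)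

lemma ps_bot [simp]: "ps bot = top"
  using le_ps_iff[of top bot] by (simp add: top_unique)

lemma ps_top [simp]: "ps top = bot"
  using inf_ps[of top] by (simp del: inf_ps)

lemma ps_eq_top_iff [simp]: "ps a = top \<longleftrightarrow> a = bot"
  using inf_ps[of a] by (auto simp del: inf_ps)

lemma ps_sup: "ps (sup a b) = inf (ps a) (ps b)"
proof (rule order.antisym)
  show "ps (sup a b) \<le> inf (ps a) (ps b)" by (simp add: ps_antimono)
  have "inf (sup a b) (inf (ps a) (ps b)) = bot"
    by (simp add: inf_sup_distrib2 inf.left_commute inf.assoc[symmetric])
  then show "inf (ps a) (ps b) \<le> ps (sup a b)" using le_ps_iff by blast
qed

lemma ps_inf_cong:
  assumes "ps a = ps b"
  shows "ps (inf a c) = ps (inf b c)"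
proof -
  have "z \<le> ps (inf a c) \<longleftrightarrow> z \<le> ps (inf b c)" for z
  proof -
    have "z \<le> ps (inf a c) \<longleftrightarrow> inf a (inf c z) = bot" using le_ps_iff by (simp add: inf.assoc)
    also have "\<dots> \<longleftrightarrow> inf c z \<le> ps a" by (simp add: le_ps_iff)
    also have "\<dots> \<longleftrightarrow> inf b (inf c z) = bot" unfolding assms by (simp add: le_ps_iff)
    also have "\<dots> \<longleftrightarrow> z \<le> ps (inf b c)" using le_ps_iff by (simp add: inf.assoc)
    finally show ?thesis .
  qed
  then show ?thesis by (meson order.antisym order.refl)
qed

definition psdm :: "'a \<Rightarrow> 'a" where
  "psdm a = ps (dm a)"

definition core :: "'a \<Rightarrow> 'a" where
  "core c = inf c (psdm c)"

lemma pm_iter_eq_psdm_pow: "pm_iter ps dm k = psdm ^^ k"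
  unfolding pm_iter_def psdm_def by (simp add: fun_eq_iff[symmetric] comp_def)

lemma core_eq: "inf c (ps (dm c)) = core c"
  unfolding core_def psdm_def ..

lemma mono_psdm: "mono psdm"
  by (simp add: mono_def psdm_def ps_antimono)

lemma mono_psdm_pow: "mono (psdm ^^ k)"
  by (rule mono_pow[OF mono_psdm])

lemma psdm_top [simp]: "psdm top = top"
  by (simp add: psdm_def)

lemma core_top [simp]: "core top = top"
  by (simp add: core_def)

lemma psdm_pow_top [simp]: "(psdm ^^ k) top = top"
  by (induction k) simp_all

lemma psdm_pow_eq_top_iff [simp]: "(psdm ^^ k) a = top \<longleftrightarrow> a = top"
  by (induction k) (auto simp: psdm_def)

lemma mono_core: "mono core"
  using mono_psdm unfolding core_def mono_def by (blast intro: inf_mono)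

lemma core_eq_top_iff [simp]: "core c = top \<longleftrightarrow> c = top"
  using psdm_pow_eq_top_iff[of 1] unfolding core_def by simp

lemma dm_core_not_le_core: "c \<noteq> top \<Longrightarrow> \<not> dm (core c) \<le> core c"
proof
  assume "c \<noteq> top" and "dm (core c) \<le> core c"
  moreover have "dm c \<le> dm (core c)" "core c \<le> ps (dm c)"
    unfolding core_def psdm_def by simp_all
  ultimately have "dm c \<le> ps (dm c)" by (meson order.trans)
  then have "dm c = bot" using le_ps_iff by simp
  with \<open>c \<noteq> top\<close> show False by simp
qed

abbreviation \<zeta> :: "'a set \<Rightarrow> 'a set" where
  "\<zeta> \<equiv> zeta dm"

lemma zeta_zeta [simp]: "\<zeta> (\<zeta> I) = I"
  unfolding zeta_def by auto

lemma zeta_antimono: "I \<subseteq> J \<Longrightarrow> \<zeta> J \<subseteq> \<zeta> I"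
  unfolding zeta_def by auto

lemma zeta_psubset_iff: "\<zeta> I \<subset> \<zeta> J \<longleftrightarrow> J \<subset> I"
  by (metis zeta_antimono zeta_zeta psubset_eq)

lemma zeta_pow: "(\<zeta> ^^ k) I = (if even k then I else \<zeta> I)"
  by (induction k) auto

lemma prime_ideal_zeta:
  assumes I: "prime_ideal I"
  shows "prime_ideal (\<zeta> I)"
  unfolding prime_ideal_def zeta_def mem_Collect_eq
proof (intro conjI allI impI)
  show "{a. dm a \<notin> I} \<noteq> {}" using prime_ideal_top[OF I] by (metis dm_bot empty_iff mem_Collect_eq)
  show "\<not> dm top \<notin> I" using prime_ideal_bot[OF I] by simp
  show "dm b \<notin> I" if "dm a \<notin> I" "b \<le> a" for a b
    using that prime_ideal_down[OF I] by (metis dm_le_iff)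
  show "dm (sup a b) \<notin> I" if "dm a \<notin> I" "dm b \<notin> I" for a b
    using that by (simp add: dm_sup prime_ideal_inf_iff[OF I])
  show "dm a \<notin> I \<or> dm b \<notin> I" if "dm (inf a b) \<notin> I" for a b
    using that by (simp add: dm_inf prime_ideal_sup_iff[OF I])
qed

lemma prime_ideal_zeta_iff [simp]: "prime_ideal (\<zeta> I) \<longleftrightarrow> prime_ideal I"
  by (metis prime_ideal_zeta zeta_zeta)

lemma lazy_walk_zeta:
  "lazy_walk dual_space (\<subseteq>) k I K \<Longrightarrow> lazy_walk dual_space (\<subseteq>) k (\<zeta> I) (\<zeta> K)"
  by (rule lazy_walk_antitone_image) (auto simp: zeta_antimono)

lemma maximal_in_zeta_iff: "maximal_in dual_space (\<zeta> I) \<longleftrightarrow> minimal_in dual_space I"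
proof -
  have "(\<forall>J\<in>dual_space. \<not> \<zeta> I \<subset> J) \<longleftrightarrow> (\<forall>J\<in>dual_space. \<not> \<zeta> I \<subset> \<zeta> J)"
    by (metis in_dual_space_iff prime_ideal_zeta_iff zeta_zeta)
  then show ?thesis unfolding maximal_in_def minimal_in_def by (simp add: zeta_psubset_iff)
qed

lemma minimal_in_zeta_iff: "minimal_in dual_space (\<zeta> I) \<longleftrightarrow> maximal_in dual_space I"
  by (metis maximal_in_zeta_iff zeta_zeta)

lemma dm_in_comparable_prime:
  assumes I: "prime_ideal I" and J: "prime_ideal J" and "J \<subseteq> I \<or> I \<subseteq> J"
    and "psdm b \<notin> I"
  shows "dm b \<in> J"
proof -
  have "inf (dm b) (psdm b) \<in> I" "inf (dm b) (psdm b) \<in> J"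
    using prime_ideal_bot I J unfolding psdm_def by simp_all
  with assms show ?thesis by (auto dest: prime_ideal_inf)
qed

lemma psdm_pow_notin_walk:
  "lazy_walk dual_space (\<subseteq>) k I K \<Longrightarrow> (psdm ^^ k) a \<notin> I \<Longrightarrow> a \<notin> (\<zeta> ^^ k) K"
proof (induction k arbitrary: I K)
  case 0
  then show ?case by simp
next
  case (Suc k)
  then obtain J where "prime_ideal I" "J \<subseteq> I \<or> I \<subseteq> J" "lazy_walk dual_space (\<subseteq>) k J K"
    by auto
  moreover from this(3) have "prime_ideal J" using lazy_walk_start_in by fastforce
  moreover have "psdm ((psdm ^^ k) a) \<notin> I" using Suc.prems(2) by simp
  ultimately have "(psdm ^^ k) a \<notin> \<zeta> J"
    using dm_in_comparable_prime unfolding zeta_def by blast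
  moreover have "lazy_walk dual_space (\<subseteq>) k (\<zeta> J) (\<zeta> K)"
    using lazy_walk_zeta \<open>lazy_walk dual_space (\<subseteq>) k J K\<close> .
  ultimately have "a \<notin> (\<zeta> ^^ k) (\<zeta> K)" using Suc.IH by blast
  then show ?case by (simp add: funpow_swap1)
qed

lemma lattice_filter_generated:
  assumes x: "prime_ideal x" and "R \<noteq> {}" and R: "upward_directed R"
  shows "lattice_filter {z. \<exists>b r. b \<notin> x \<and> r \<in> R \<and> inf b (dm r) \<le> z}"
    (is "lattice_filter ?F")
  unfolding lattice_filter_def
proof (intro conjI allI impI)
  show "?F \<noteq> {}" using \<open>R \<noteq> {}\<close> prime_ideal_top[OF x] by blast
  show "b \<in> ?F" if "a \<in> ?F" "a \<le> b" for a b
    using that by (blast intro: order.trans)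
  show "inf a b \<in> ?F" if ab: "a \<in> ?F" "b \<in> ?F" for a b
  proof -
    obtain b1 r1 b2 r2 where b: "b1 \<notin> x" "b2 \<notin> x" and r: "r1 \<in> R" "r2 \<in> R"
      and le: "inf b1 (dm r1) \<le> a" "inf b2 (dm r2) \<le> b"
      using ab by blast
    obtain r where "r \<in> R" "r1 \<le> r" "r2 \<le> r"
      using R r unfolding upward_directed_def by blast
    then have "inf (inf b1 b2) (dm r) \<le> inf b1 (dm r1)"
      "inf (inf b1 b2) (dm r) \<le> inf b2 (dm r2)"
      by (simp_all add: inf_mono le_infI1 le_infI2)
    then have "inf (inf b1 b2) (dm r) \<le> inf a b"
      using le by (meson le_inf_iff order.trans)
    moreover have "inf b1 b2 \<notin> x" using prime_ideal_inf[OF x] b by blast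
    ultimately show ?thesis using \<open>r \<in> R\<close> by blast
  qed
qed

lemma comparable_prime_below:
  assumes x: "prime_ideal x" and "R \<noteq> {}" and R: "upward_directed R"
    and psdm_R: "\<And>r. r \<in> R \<Longrightarrow> psdm r \<in> x"
  obtains J where "prime_ideal J" "J \<subseteq> x" "R \<subseteq> \<zeta> J"
proof -
  define F where "F = {z. \<exists>b r. b \<notin> x \<and> r \<in> R \<and> inf b (dm r) \<le> z}"
  have in_F: "z \<in> F" if "b \<notin> x" "r \<in> R" "inf b (dm r) \<le> z" for b r z
    unfolding F_def using that by blast
  have "bot \<notin> F"
  proof
    assume "bot \<in> F"
    then obtain b r where "b \<notin> x" "r \<in> R" "inf b (dm r) \<le> bot" unfolding F_def by blast
    then have "b \<le> psdm r" unfolding psdm_def by (simp add: le_ps_iff inf.commute bot_unique)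
    then show False
      using psdm_R[OF \<open>r \<in> R\<close>] prime_ideal_down[OF x] \<open>b \<notin> x\<close> by blast
  qed
  then have "{..bot} \<inter> F = {}" by (auto simp: bot_unique)
  then obtain J where J: "prime_ideal J" "{..bot} \<subseteq> J" "J \<inter> F = {}"
    using prime_ideal_theorem[OF lattice_ideal_atMost lattice_filter_generated[OF assms(1-3)]]
    unfolding F_def by blast
  obtain r0 where "r0 \<in> R" using \<open>R \<noteq> {}\<close> by blast
  have "J \<subseteq> x"
    using J in_F[OF _ \<open>r0 \<in> R\<close> inf.cobounded1] by blast
  moreover have "R \<subseteq> \<zeta> J"
    using J in_F[OF prime_ideal_top[OF x] _ inf.cobounded2] unfolding zeta_def by blast
  ultimately show thesis using that J(1) by blast
qed

lemma walk_to_prime_above_directed: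
  assumes "prime_ideal x" and "Q \<noteq> {}" and "upward_directed Q"
    and "\<And>q. q \<in> Q \<Longrightarrow> (psdm ^^ k) q \<in> x"
  shows "\<exists>p. prime_ideal p \<and> Q \<subseteq> p \<and> lazy_walk dual_space (\<subseteq>) k x ((\<zeta> ^^ k) p)"
  using assms
proof (induction k arbitrary: x)
  case 0
  then show ?case by auto
next
  case (Suc k)
  obtain J where J: "prime_ideal J" "J \<subseteq> x" "(psdm ^^ k) ` Q \<subseteq> \<zeta> J"
    using comparable_prime_below[of x "(psdm ^^ k) ` Q"] Suc.prems
      upward_directed_image[OF _ mono_psdm_pow] by auto
  then obtain p where p: "prime_ideal p" "Q \<subseteq> p" "lazy_walk dual_space (\<subseteq>) k (\<zeta> J) ((\<zeta> ^^ k) p)"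
    using Suc.IH[of "\<zeta> J"] Suc.prems(2,3) by (auto simp: prime_ideal_zeta)
  from lazy_walk_zeta[OF p(3)] have "lazy_walk dual_space (\<subseteq>) k J ((\<zeta> ^^ Suc k) p)" by simp
  then have "lazy_walk dual_space (\<subseteq>) (Suc k) x ((\<zeta> ^^ Suc k) p)"
    using Suc.prems(1) J(2) by auto
  then show ?case using p by blast
qed

lemma pm_congruence_psdm_pow:
  "pm_congruence ps dm \<theta> \<Longrightarrow> (a, b) \<in> \<theta> \<Longrightarrow> ((psdm ^^ k) a, (psdm ^^ k) b) \<in> \<theta>"
  by (induction k) (simp_all add: psdm_def pm_congruence_ps pm_congruence_dm)

lemma pm_congruence_core:
  "pm_congruence ps dm \<theta> \<Longrightarrow> (a, b) \<in> \<theta> \<Longrightarrow> (core a, core b) \<in> \<theta>"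
  unfolding core_def using pm_congruence_psdm_pow[of \<theta> a b 1] by (simp add: pm_congruence_inf)

lemma pm_congruence_ps_psdm_kernel:
  "pm_congruence ps dm {(a, b). ps a = ps b \<and> psdm a = psdm b}"
proof (rule pm_congruenceI)
  fix a b c d
  assume "(a, b) \<in> {(a, b). ps a = ps b \<and> psdm a = psdm b}"
    and "(c, d) \<in> {(a, b). ps a = ps b \<and> psdm a = psdm b}"
  then have h: "ps a = ps b" "ps (dm a) = ps (dm b)" "ps c = ps d" "ps (dm c) = ps (dm d)"
    unfolding psdm_def by auto
  have "ps (inf a c) = ps (inf b d)"
    using ps_inf_cong[OF h(1), of c] ps_inf_cong[OF h(3), of b] by (simp add: inf.commute)
  moreover have "ps (dm (sup a c)) = ps (dm (sup b d))"
    using ps_inf_cong[OF h(2), of "dm c"] ps_inf_cong[OF h(4), of "dm b"]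
    by (simp add: dm_sup inf.commute)
  ultimately show "(inf a c, inf b d) \<in> {(a, b). ps a = ps b \<and> psdm a = psdm b}"
    "(sup a c, sup b d) \<in> {(a, b). ps a = ps b \<and> psdm a = psdm b}"
    using h by (simp_all add: psdm_def dm_inf ps_sup)
qed (auto simp: refl_on_def sym_def trans_def psdm_def)

lemma regular_eqI:
  assumes "pm_regular ps dm" and "ps a = ps b" and "psdm a = psdm b"
  shows "a = b"
proof -
  let ?\<psi> = "{(a, b). ps a = ps b \<and> psdm a = psdm b}"
  have "?\<psi> `` {top} = {top}"
    by (auto simp: psdm_def)
  then have "?\<psi> = Id"
    using pm_regular_congruence_eq_Id[OF assms(1) pm_congruence_ps_psdm_kernel] by blast
  then show ?thesis using assms(2,3) by blast
qed

lemma regular_no_prime_chain: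
  fixes I J K :: "'a set"
  assumes reg: "pm_regular ps dm" and I: "prime_ideal I" and J: "prime_ideal J" and K: "prime_ideal K"
    and "I \<subset> J" "J \<subset> K"
  shows False
proof -
  obtain y where y: "y \<in> J" "y \<notin> I" using \<open>I \<subset> J\<close> by auto
  obtain x where x: "x \<in> K" "x \<notin> J" using \<open>J \<subset> K\<close> by auto
  define s where "s = sup y (ps y)"
  define t where "t = inf x (dm (ps (dm x)))"
  have "ps y \<in> I" using prime_ideal_inf[OF I, of y "ps y"] prime_ideal_bot[OF I] y by simp
  then have "s \<in> J" unfolding s_def using \<open>I \<subset> J\<close> prime_ideal_sup[OF J] y by blast
  have "dm (ps (dm x)) \<notin> K"
  proof
    assume "dm (ps (dm x)) \<in> K"
    then have "sup x (dm (ps (dm x))) \<in> K" using prime_ideal_sup[OF K] x by blast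
    moreover have "sup x (dm (ps (dm x))) = top" using dm_inf[of "dm x" "ps (dm x)"] by simp
    ultimately show False using prime_ideal_top[OF K] by simp
  qed
  then have "t \<notin> J" unfolding t_def using \<open>J \<subset> K\<close> x prime_ideal_inf[OF J] by blast
  have "ps s = bot" "psdm t = bot" unfolding s_def t_def psdm_def by (simp_all add: ps_sup dm_inf)
  then have "ps (inf t s) = ps t" "psdm (inf t s) = psdm t"
    using ps_inf_cong[of s top t] by (simp_all add: inf.commute psdm_def dm_inf ps_sup)
  then have "inf t s = t" using regular_eqI[OF reg] by blast
  then show False using \<open>s \<in> J\<close> \<open>t \<notin> J\<close> prime_ideal_down[OF J] inf.orderI by metis
qed

lemma regular_no_three_chains:
  assumes "pm_regular ps dm"
  shows "no_three_chains (dual_space :: 'a set set)"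
  unfolding no_three_chains_def Ball_def in_dual_space_iff using regular_no_prime_chain[OF assms] by blast

lemma pm_congruence_inf_fixpoint:
  assumes "psdm s = s"
  shows "pm_congruence ps dm {(a, b). inf a s = inf b s}"
proof (rule pm_congruenceI)
  fix a b c d
  assume "(a, b) \<in> {(a, b). inf a s = inf b s}" "(c, d) \<in> {(a, b). inf a s = inf b s}"
  then have h: "inf a s = inf b s" "inf c s = inf d s" by auto
  have "inf (inf a c) s = inf (inf a s) (inf c s)" "inf (inf b d) s = inf (inf b s) (inf d s)"
    by (simp_all add: inf_aci)
  moreover have "inf (sup a c) s = sup (inf a s) (inf c s)" "inf (sup b d) s = sup (inf b s) (inf d s)"
    by (simp_all only: inf_sup_distrib2)
  ultimately
  show "(inf a c, inf b d) \<in> {(a, b). inf a s = inf b s}"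
    "(sup a c, sup b d) \<in> {(a, b). inf a s = inf b s}"
    using h by simp_all
next
  have ps_inf_s: "inf (ps a) s = inf (ps (inf a s)) s" for a
  proof (rule order.antisym)
    show "inf (ps a) s \<le> inf (ps (inf a s)) s" by (simp add: le_infI1 ps_antimono)
    have "inf a (inf (ps (inf a s)) s) = bot" using inf_ps[of "inf a s"] by (simp only: inf_aci)
    then show "inf (ps (inf a s)) s \<le> inf (ps a) s" using le_ps_iff by simp
  qed
  have "inf (dm s) s = bot" using assms inf_ps[of "dm s"] unfolding psdm_def by (simp add: inf.commute)
  then have dm_inf_s: "inf (dm a) s = inf (dm (inf a s)) s" for a
    by (simp add: dm_inf inf_sup_distrib2)
  fix a b
  assume "(a, b) \<in> {(a, b). inf a s = inf b s}"
  then show "(ps a, ps b) \<in> {(a, b). inf a s = inf b s}" "(dm a, dm b) \<in> {(a, b). inf a s = inf b s}"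
    using ps_inf_s[of a] ps_inf_s[of b] dm_inf_s[of a] dm_inf_s[of b] by simp_all
qed (auto simp: refl_on_def sym_def trans_def)

lemma in_M_iff:
  "in_M n ps dm \<longleftrightarrow> pm_regular ps dm \<and> (\<forall>c. psdm ((psdm ^^ n) (core c)) = (psdm ^^ n) (core c))"
  unfolding in_M_def pm_iter_eq_psdm_pow core_eq using pm_algebra by (simp add: eq_commute)

lemma simple_in_M_iff:
  assumes "(bot::'a) \<noteq> top" and reg: "pm_regular ps dm"
  shows "in_M n ps dm \<and> pm_simple ps dm \<longleftrightarrow> (\<forall>c. c \<noteq> top \<longrightarrow> (psdm ^^ n) (core c) = bot)"
proof (intro iffI allI impI)
  fix c :: 'a
  assume "in_M n ps dm \<and> pm_simple ps dm" and "c \<noteq> top"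
  define s where "s = (psdm ^^ n) (core c)"
  have "psdm s = s" using \<open>in_M n ps dm \<and> _\<close> unfolding in_M_iff s_def by simp
  then have "{(a, b). inf a s = inf b s} = Id \<or> {(a, b). inf a s = inf b s} = UNIV"
    using pm_congruence_inf_fixpoint \<open>_ \<and> pm_simple ps dm\<close> unfolding pm_simple_def by blast
  moreover have "(s, top) \<in> {(a, b). inf a s = inf b s} - Id"
    using \<open>c \<noteq> top\<close> unfolding s_def by simp
  ultimately have "(bot, top) \<in> {(a, b). inf a s = inf b s}" by blast
  then show "(psdm ^^ n) (core c) = bot" unfolding s_def by simp
next
  assume vanish: "\<forall>c. c \<noteq> top \<longrightarrow> (psdm ^^ n) (core c) = bot"
  then have "psdm ((psdm ^^ n) (core c)) = (psdm ^^ n) (core c)" for c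
    by (cases "c = top") (simp_all add: psdm_def)
  then have "in_M n ps dm" using reg unfolding in_M_iff by blast
  moreover have "\<theta> = Id \<or> \<theta> = UNIV" if \<theta>: "pm_congruence ps dm \<theta>" for \<theta>
  proof (cases "\<theta> `` {top} = {top}")
    case True
    then show ?thesis using pm_regular_congruence_eq_Id[OF reg \<theta>] by blast
  next
    case False
    then obtain c where "(top, c) \<in> \<theta>" "c \<noteq> top" using pm_congruence_refl[OF \<theta>] by blast
    then have "((psdm ^^ n) (core top), (psdm ^^ n) (core c)) \<in> \<theta>"
      by (intro pm_congruence_psdm_pow[OF \<theta>] pm_congruence_core[OF \<theta>])
    then have "(top, bot) \<in> \<theta>" using vanish \<open>c \<noteq> top\<close> by (simp add: core_def)
    then show ?thesis using pm_congruence_eq_UNIV[OF \<theta>] by blast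
  qed
  ultimately show "in_M n ps dm \<and> pm_simple ps dm"
    using assms(1) unfolding pm_simple_def by blast
qed

lemma lazy_walk_zeta_pow:
  "lazy_walk dual_space (\<subseteq>) k I K \<Longrightarrow> lazy_walk dual_space (\<subseteq>) k ((\<zeta> ^^ j) I) ((\<zeta> ^^ j) K)"
  by (simp add: zeta_pow lazy_walk_zeta)

lemma core_vanishes_if_walks:
  assumes walks: "\<forall>I\<in>dual_space. \<forall>K\<in>dual_space.
      lazy_walk dual_space (\<subseteq>) n I K \<or> lazy_walk dual_space (\<subseteq>) n I (\<zeta> K)"
    and "c \<noteq> top"
  shows "(psdm ^^ n) (core c) = bot"
proof (rule ccontr)
  assume "(psdm ^^ n) (core c) \<noteq> bot"
  then obtain I where I: "prime_ideal I" "(psdm ^^ n) (core c) \<notin> I"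
    using prime_ideal_separation[of "(psdm ^^ n) (core c)" bot] bot_unique by blast
  obtain K where K: "prime_ideal K" "core c \<in> K" "dm (core c) \<notin> K"
    using prime_ideal_separation dm_core_not_le_core[OF \<open>c \<noteq> top\<close>] by blast
  then have "core c \<in> \<zeta> K" unfolding zeta_def by simp
  from walks I(1) K(1) have "lazy_walk dual_space (\<subseteq>) n I K \<or> lazy_walk dual_space (\<subseteq>) n I (\<zeta> K)"
    by simp
  then have "core c \<notin> (\<zeta> ^^ n) K \<or> core c \<notin> (\<zeta> ^^ n) (\<zeta> K)"
    using psdm_pow_notin_walk I(2) by blast
  then show False using K(2) \<open>core c \<in> \<zeta> K\<close> by (auto simp: zeta_pow split: if_splits)
qed

lemma lazy_walk_to_zeta_maximal:
  assumes p: "prime_ideal p" and w: "maximal_in dual_space w"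
    and "core ` w \<subseteq> p" and "\<not> w \<subseteq> p"
  shows "lazy_walk dual_space (\<subseteq>) (Suc 0) p (\<zeta> w)"
proof -
  have pw: "prime_ideal w" using w unfolding maximal_in_def by simp
  obtain c0 where c0: "c0 \<in> w" "c0 \<notin> p" using \<open>\<not> w \<subseteq> p\<close> by blast
  let ?R = "{c \<in> w. c0 \<le> c}"
  have R_ne: "?R \<noteq> {}" using c0(1) by blast
  have R_dir: "upward_directed ?R"
    unfolding upward_directed_def
  proof (intro ballI)
    fix a b assume "a \<in> ?R" and "b \<in> ?R"
    then have "sup a b \<in> ?R" using prime_ideal_sup[OF pw] by (simp add: le_supI1)
    then show "\<exists>c\<in>?R. a \<le> c \<and> b \<le> c" by (intro bexI[of _ "sup a b"]) simp_all
  qed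
  have R_psdm: "psdm c \<in> p" if "c \<in> ?R" for c
  proof -
    have "core c \<in> p" using that \<open>core ` w \<subseteq> p\<close> by (simp add: image_subset_iff)
    then have "c \<in> p \<or> psdm c \<in> p" unfolding core_def by (rule prime_ideal_inf[OF p])
    moreover have "c \<notin> p" using that c0(2) prime_ideal_down[OF p, of c c0] by blast
    ultimately show ?thesis by blast
  qed
  obtain J where J: "prime_ideal J" "J \<subseteq> p" "?R \<subseteq> \<zeta> J"
    using comparable_prime_below[OF p R_ne R_dir R_psdm] by blast
  have "w \<subseteq> \<zeta> J"
  proof
    fix c assume "c \<in> w"
    then have "sup c c0 \<in> \<zeta> J" using J(3) prime_ideal_sup[OF pw] c0(1) by (auto simp: le_supI2)
    then show "c \<in> \<zeta> J" using prime_ideal_down[OF prime_ideal_zeta[OF J(1)]] sup_ge1 by blast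
  qed
  then have "\<zeta> J = w" using w prime_ideal_zeta[OF J(1)] unfolding maximal_in_def by auto
  then have "J = \<zeta> w" using zeta_zeta[of J] by simp
  then show ?thesis using J(1,2) p by auto
qed

lemma walk_or_longer_walk_to_maximal:
  assumes vanish: "\<And>c. c \<noteq> top \<Longrightarrow> (psdm ^^ n) (core c) = bot"
    and x: "prime_ideal x" and w: "maximal_in dual_space w"
  shows "lazy_walk dual_space (\<subseteq>) n x ((\<zeta> ^^ n) w) \<or>
    lazy_walk dual_space (\<subseteq>) (Suc n) x ((\<zeta> ^^ Suc n) w)"
proof -
  have pw: "prime_ideal w" using w unfolding maximal_in_def by simp
  have w_max: "J = w" if "prime_ideal J" "w \<subseteq> J" for J
    using w that unfolding maximal_in_def by auto
  have "core ` w \<noteq> {}" using prime_ideal_bot[OF pw] by blast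
  moreover have "upward_directed (core ` w)"
    using prime_ideal_upward_directed[OF pw] mono_core by (rule upward_directed_image)
  moreover have "(psdm ^^ n) q \<in> x" if q: "q \<in> core ` w" for q
  proof -
    obtain c where "c \<in> w" "q = core c" using q by blast
    moreover from this have "c \<noteq> top" using prime_ideal_top[OF pw] by blast
    ultimately show ?thesis using vanish prime_ideal_bot[OF x] by simp
  qed
  ultimately have "\<exists>p. prime_ideal p \<and> core ` w \<subseteq> p \<and> lazy_walk dual_space (\<subseteq>) n x ((\<zeta> ^^ n) p)"
    by (rule walk_to_prime_above_directed[OF x])
  then obtain p where p: "prime_ideal p" "core ` w \<subseteq> p"
    and walk_p: "lazy_walk dual_space (\<subseteq>) n x ((\<zeta> ^^ n) p)"
    by blast
  show ?thesis
  proof (cases "w \<subseteq> p")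
    case True
    then have "p = w" using w_max p(1) by simp
    with walk_p show ?thesis by simp
  next
    case False
    then have "lazy_walk dual_space (\<subseteq>) (Suc 0) p (\<zeta> w)"
      using lazy_walk_to_zeta_maximal[OF p(1) w p(2)] by blast
    then have "lazy_walk dual_space (\<subseteq>) (Suc 0) ((\<zeta> ^^ n) p) ((\<zeta> ^^ Suc n) w)"
      using lazy_walk_zeta_pow[of "Suc 0" p "\<zeta> w" n] by (simp add: funpow_swap1)
    then have "lazy_walk dual_space (\<subseteq>) (Suc n) x ((\<zeta> ^^ Suc n) w)"
      using lazy_walk_append[OF walk_p] by (metis add_Suc_right add_0_right)
    then show ?thesis ..
  qed
qed

lemma walks_if_core_vanishes:
  assumes reg: "pm_regular ps dm" and vanish: "\<And>c. c \<noteq> top \<Longrightarrow> (psdm ^^ n) (core c) = bot"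
    and I: "I \<in> dual_space" and K: "K \<in> dual_space"
  shows "lazy_walk dual_space (\<subseteq>) n I K \<or> lazy_walk dual_space (\<subseteq>) n I (\<zeta> K)"
proof -
  note P = regular_no_three_chains[OF reg]
  obtain x where x: "x \<in> {I, \<zeta> I}" "minimal_in dual_space x"
    using minimal_or_maximal_in[OF P I] minimal_in_zeta_iff by blast
  obtain w where w: "w \<in> {K, \<zeta> K}" "maximal_in dual_space w"
    using minimal_or_maximal_in[OF P K] maximal_in_zeta_iff by blast
  have "prime_ideal x" using x(2) unfolding minimal_in_def by simp
  have "if even n then minimal_in dual_space ((\<zeta> ^^ Suc n) w) else maximal_in dual_space ((\<zeta> ^^ Suc n) w)"
    using w(2) by (simp add: zeta_pow minimal_in_zeta_iff)
  then have "lazy_walk dual_space (\<subseteq>) n x ((\<zeta> ^^ n) w) \<or> lazy_walk dual_space (\<subseteq>) n x ((\<zeta> ^^ Suc n) w)"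
    using walk_or_longer_walk_to_maximal[OF vanish \<open>prime_ideal x\<close> w(2)]
      lazy_walk_shorten_by_parity[OF P x(2)] by blast
  moreover have "(\<zeta> ^^ j) w \<in> {K, \<zeta> K}" for j using w(1) by (auto simp: zeta_pow)
  ultimately obtain z where z: "z \<in> {K, \<zeta> K}" "lazy_walk dual_space (\<subseteq>) n x z" by blast
  moreover have "\<zeta> z \<in> {K, \<zeta> K}" using z(1) by auto
  ultimately show ?thesis using x(1) lazy_walk_zeta[of n "\<zeta> I" z] by auto
qed

end

theorem corollary4p3:
  fixes ps dm :: "'a::{distrib_lattice,bounded_lattice} \<Rightarrow> 'a" and n :: nat
  assumes "(bot::'a) \<noteq> top"
    and "pm_algebra ps dm"
    and "pm_regular ps dm"
  shows "(in_M n ps dm \<and> pm_simple ps dm) \<longleftrightarrow>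
         (\<forall>x\<in>(dual_space::'a set set). \<forall>y\<in>dual_space.
            ell dual_space (\<subseteq>) x y \<le> enat n \<or> ell dual_space (\<subseteq>) x (zeta dm y) \<le> enat n)"
proof -
  interpret pm_alg ps dm by (rule pm_alg.intro) fact
  have "in_M n ps dm \<and> pm_simple ps dm \<longleftrightarrow> (\<forall>c. c \<noteq> top \<longrightarrow> (psdm ^^ n) (core c) = bot)"
    using simple_in_M_iff assms(1,3) by blast
  also have "\<dots> \<longleftrightarrow> (\<forall>x\<in>(dual_space::'a set set). \<forall>y\<in>dual_space.
      lazy_walk dual_space (\<subseteq>) n x y \<or> lazy_walk dual_space (\<subseteq>) n x (\<zeta> y))"
    using core_vanishes_if_walks walks_if_core_vanishes[OF assms(3)] by blast
  finally show ?thesis by (simp add: ell_le_enat_iff_lazy_walk)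
qed

end
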